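(* Let $n\ge3$, and let $R$ and $S$ be filtered $\lambda$-ring structures on $\mathbf{Z}[x]/(x^n)$ and $\sigma\colon R\to S$ any filtered $\lambda$-ring isomorphism. Write $\sigma(x)=\sum_{k=1}^{n-1}b_kx^k$, regard this as a polynomial in $\mathbf{Z}[x]/(x^{n+1})$, and let $\sigma^{-1}(x)$ be its compositional inverse in $\mathbf{Z}[x]/(x^{n+1})$. Let $\tilde R$ be a filtered $\lambda$-ring structure on $\mathbf{Z}[x]/(x^{n+1})$ with $\psi^p_{\tilde R}(x)\equiv\psi^p_R(x)\pmod{x^n}$ for all primes $p$, and define for each prime $p$ \[\psi^p_{\tilde S}(x)=\sigma^{-1}\bigl(\psi^p_{\tilde R}(\sigma(x))\bigr)\in\mathbf{Z}[x]/(x^{n+1}).\] Then $\psi^p_{\tilde S}(x)\equiv x^p\pmod p$ for all primes $p\ge n$.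
   Context: A (special) $\lambda$-ring is a commutative ring with operations $\lambda^i$ satisfying the Atiyah–Tall axioms; a filtered $\lambda$-ring is a $\lambda$-ring with decreasing filtration by ideals closed under $\lambda^i$, $i\ge1$; morphisms are filtration-preserving $\lambda$-ring maps. $\mathbf{Z}[x]/(x^m)$ is filtered with $x$ in a fixed positive filtration $d$ ($I^k$ generated by the $x^j$ with $jd\ge k$). A filtered $\lambda$-ring structure is determined by the polynomials $\psi^p(x)$ (Adams operations on $x$), $p$ prime; a filtered ring automorphism $\sigma$ is a filtered $\lambda$-ring isomorphism $R\to S$ iff $\psi^p_R(\sigma(x))=\sigma(\psi^p_S(x))$ as polynomials for all primes $p$ (here $f(g(x))$ denotes composition of polynomials). *)

theory Defs
  imports "HOL-Computational_Algebra.Polynomial" "HOL-Computational_Algebra.Primes"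
begin

text \<open>Elements of Z[x]/(x^m) are represented by integer polynomials of degree < m.\<close>

definition tcarrier :: "nat \<Rightarrow> int poly set" where
  "tcarrier m = {a. \<forall>i\<ge>m. coeff a i = 0}"

definition trunc :: "nat \<Rightarrow> int poly \<Rightarrow> int poly" where
  "trunc m a = (\<Sum>i<m. monom (coeff a i) i)"

abbreviation X :: "int poly" where "X \<equiv> [:0, 1:]"

text \<open>Filtration with x in filtration d: I^k is generated by the x^j with j*d \<ge> k.\<close>
definition filt :: "nat \<Rightarrow> nat \<Rightarrow> nat \<Rightarrow> int poly set" where
  "filt m d k = {a \<in> tcarrier m. \<forall>j. j * d < k \<longrightarrow> coeff a j = 0}"

text \<open>Adams operations of a family of lambda-operations L, by Newton's formula
  psi^n = sum_{i=1}^{n-1} (-1)^(i+1) lambda^i psi^(n-i) + (-1)^(n+1) n lambda^n.\<close>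
function adams :: "nat \<Rightarrow> (nat \<Rightarrow> int poly \<Rightarrow> int poly) \<Rightarrow> nat \<Rightarrow> int poly \<Rightarrow> int poly" where
  "adams m L n a =
     (if n = 0 then 0 else
      trunc m ((\<Sum>i\<in>{1..<n}. smult ((-1) ^ (i + 1)) (L i a * adams m L (n - i) a))
               + smult ((-1) ^ (n + 1) * int n) (L n a)))"
  by pat_completeness auto
termination
  by (relation "measure (\<lambda>(m, L, n, a). n)") auto

text \<open>(Special) lambda-ring structure on the torsion-free ring Z[x]/(x^m), given by its
  lambda-operations L i.  Pre-lambda-ring axioms, lambda_t(1) = 1 + t, and (equivalent for
  torsion-free rings to the Atiyah--Tall axioms) the Adams operations are ring
  endomorphisms with psi^n psi^k = psi^(nk).\<close>
definition lambda_ring :: "nat \<Rightarrow> (nat \<Rightarrow> int poly \<Rightarrow> int poly) \<Rightarrow> bool" where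
  "lambda_ring m L \<longleftrightarrow>
     (\<forall>i. \<forall>a\<in>tcarrier m. L i a \<in> tcarrier m) \<and>
     (\<forall>a\<in>tcarrier m. L 0 a = 1 \<and> L 1 a = a) \<and>
     (\<forall>n. \<forall>a\<in>tcarrier m. \<forall>b\<in>tcarrier m.
        L n (a + b) = trunc m (\<Sum>i\<le>n. L i a * L (n - i) b)) \<and>
     (\<forall>n\<ge>2. L n 1 = 0) \<and>
     (\<forall>n\<ge>1. adams m L n 1 = 1 \<and>
        (\<forall>a\<in>tcarrier m. \<forall>b\<in>tcarrier m.
           adams m L n (a + b) = adams m L n a + adams m L n b \<and>
           adams m L n (trunc m (a * b)) = trunc m (adams m L n a * adams m L n b))) \<and>
     (\<forall>n\<ge>1. \<forall>k\<ge>1. \<forall>a\<in>tcarrier m. adams m L n (adams m L k a) = adams m L (n * k) a)"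

definition filtered_lambda_ring :: "nat \<Rightarrow> nat \<Rightarrow> (nat \<Rightarrow> int poly \<Rightarrow> int poly) \<Rightarrow> bool" where
  "filtered_lambda_ring m d L \<longleftrightarrow> lambda_ring m L \<and>
     (\<forall>k i a. 1 \<le> i \<longrightarrow> a \<in> filt m d k \<longrightarrow> L i a \<in> filt m d k)"

definition filtered_lambda_iso ::
  "nat \<Rightarrow> nat \<Rightarrow> (nat \<Rightarrow> int poly \<Rightarrow> int poly) \<Rightarrow> (nat \<Rightarrow> int poly \<Rightarrow> int poly)
     \<Rightarrow> (int poly \<Rightarrow> int poly) \<Rightarrow> bool" where
  "filtered_lambda_iso m d L1 L2 \<sigma> \<longleftrightarrow>
     bij_betw \<sigma> (tcarrier m) (tcarrier m) \<and>
     \<sigma> 1 = 1 \<and>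
     (\<forall>a\<in>tcarrier m. \<forall>b\<in>tcarrier m.
        \<sigma> (a + b) = \<sigma> a + \<sigma> b \<and> \<sigma> (trunc m (a * b)) = trunc m (\<sigma> a * \<sigma> b)) \<and>
     (\<forall>i. \<forall>a\<in>tcarrier m. \<sigma> (L1 i a) = L2 i (\<sigma> a)) \<and>
     (\<forall>k. \<sigma> ` filt m d k \<subseteq> filt m d k) \<and>
     (\<forall>k. \<forall>a\<in>tcarrier m. \<sigma> a \<in> filt m d k \<longrightarrow> a \<in> filt m d k)"

end

theory Submission
  imports Defs "HOL-Computational_Algebra.Formal_Power_Series"
begin

text \<open>
  In a torsion-free \<lambda>-ring, \<psi>^k(a) is Newton's polynomial in \<lambda>^1(a), ..., \<lambda>^k(a).
  Write F = \<lambda>_{-t}(a) and Q = \<Sum>_k \<psi>^k(a) t^k. Newton's identity F Q + t F' = 0, multiplied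
  by p F^(p-1), becomes p F^p Q + t (F^p)' = 0; since F^p \<equiv> 1 + (F - 1)^p mod p and F - 1
  starts with -\<lambda>^1(a) t, comparing the coefficients of t^p gives \<psi>^p(a) \<equiv> a^p mod p.

  Hence \<psi>^p(x) \<equiv> x^p mod p in the \<lambda>-ring on Z[x]/(x^(n+1)), and this congruence survives
  composition with \<sigma>(x) and \<sigma>^-1(x). For p > n the power x^p vanishes; for p = n only the
  linear coefficients b of \<sigma>(x) and b' of \<sigma>^-1(x) matter in degrees \<le> n, and b' b^n = 1
  because b' b = 1 and n is odd.
\<close>

unbundle fps_syntax

function newton_psi :: "(nat \<Rightarrow> 'a::comm_ring_1) \<Rightarrow> nat \<Rightarrow> 'a" where
  "newton_psi E n =
     (if n = 0 then 0 else
      (\<Sum>i\<in>{1..<n}. (-1) ^ (i + 1) * E i * newton_psi E (n - i))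
        + (-1) ^ (n + 1) * of_nat n * E n)"
  by pat_completeness auto
termination
  by (relation "measure snd") auto

declare newton_psi.simps [simp del]

lemma newton_psi_0 [simp]: "newton_psi E 0 = 0"
  by (simp add: newton_psi.simps)

definition lambda_neg_series :: "(nat \<Rightarrow> 'a::comm_ring_1) \<Rightarrow> 'a fps" where
  "lambda_neg_series E = Abs_fps (\<lambda>i. if i = 0 then 1 else (-1) ^ i * E i)"

lemma newton_identity:
  "lambda_neg_series E * Abs_fps (newton_psi E) + fps_X * fps_deriv (lambda_neg_series E) = 0"
  (is "?lhs = 0")
proof (rule fps_ext)
  fix k
  show "?lhs $ k = 0 $ k"
  proof (cases k)
    case 0
    then show ?thesis by (simp add: fps_mult_nth)
  next
    case (Suc m)
    have "{0..k} = insert 0 (insert k {1..<k})" using Suc by auto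
    then have "(lambda_neg_series E * Abs_fps (newton_psi E)) $ k
        = newton_psi E k + (\<Sum>i\<in>{1..<k}. (-1) ^ i * E i * newton_psi E (k - i))"
      by (simp add: fps_mult_nth lambda_neg_series_def Suc)
    moreover have "newton_psi E k
        = - (\<Sum>i\<in>{1..<k}. (-1) ^ i * E i * newton_psi E (k - i)) - of_nat k * ((-1) ^ k * E k)"
      by (subst newton_psi.simps) (simp add: Suc sum_negf[symmetric])
    ultimately show ?thesis
      by (simp add: lambda_neg_series_def Suc)
  qed
qed

lemma prime_dvd_power_add_diff:
  fixes a b :: "'a::comm_ring_1"
  assumes "prime p"
  shows "of_nat p dvd (a + b) ^ p - a ^ p - b ^ p"
proof -
  have p0: "p > 0" using assms prime_gt_0_nat by blast
  have "{..p} = insert 0 (insert p {1..<p})" using p0 by auto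
  then have "(a + b) ^ p - a ^ p - b ^ p = (\<Sum>k\<in>{1..<p}. of_nat (p choose k) * a ^ k * b ^ (p - k))"
    using p0 by (simp add: binomial_ring algebra_simps)
  also have "of_nat p dvd \<dots>"
  proof (rule dvd_sum)
    fix k assume "k \<in> {1..<p}"
    then have "p dvd p choose k" using assms by (intro dvd_choose_prime) auto
    then show "of_nat p dvd of_nat (p choose k) * a ^ k * b ^ (p - k)"
      by (intro dvd_mult2) (metis dvd_def of_nat_mult)
  qed
  finally show ?thesis .
qed

lemma prime_dvd_neg_power_add:
  fixes a :: "'a::comm_ring_1"
  assumes "prime p"
  shows "of_nat p dvd (- a) ^ p + a ^ p"
proof -
  have "(- a + a) ^ p - (- a) ^ p - a ^ p = - ((- a) ^ p + a ^ p)"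
    using prime_gt_0_nat[OF assms] by (simp add: zero_power algebra_simps)
  then show ?thesis
    using prime_dvd_power_add_diff[OF assms, of "- a" a] by (metis dvd_minus_iff)
qed

lemma newton_identity_power:
  "of_nat k * (lambda_neg_series E ^ k * Abs_fps (newton_psi E))
     + fps_X * fps_deriv (lambda_neg_series E ^ k) = 0"
proof (cases "k = 0")
  case False
  define F where "F = lambda_neg_series E"
  have "F ^ k = F * F ^ (k - 1)"
    using False by (simp flip: power_Suc)
  then have "of_nat k * (F ^ k * Abs_fps (newton_psi E)) + fps_X * fps_deriv (F ^ k)
      = of_nat k * F ^ (k - 1) * (F * Abs_fps (newton_psi E) + fps_X * fps_deriv F)"
    unfolding fps_deriv_power' by (simp add: algebra_simps)
  then show ?thesis
    using newton_identity[of E] by (simp add: F_def)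
qed simp

lemma newton_psi_prime_cong:
  fixes E :: "nat \<Rightarrow> 'a::{idom,ring_char_0}"
  assumes p: "prime p"
  shows "of_nat p dvd newton_psi E p - E 1 ^ p"
proof -
  define F where "F = lambda_neg_series E"
  define Q where "Q = Abs_fps (newton_psi E)"
  define G where "G = F - 1"
  have p0: "p > 0"
    using p prime_gt_0_nat by blast
  have G0: "G $ 0 = 0" and G1: "G $ 1 = - E 1"
    by (simp_all add: G_def F_def lambda_neg_series_def)
  obtain R where "(1 + G) ^ p - 1 ^ p - G ^ p = of_nat p * R"
    using prime_dvd_power_add_diff[OF p, of 1 G] by (elim dvdE)
  then have F_power: "F ^ p = 1 + G ^ p + of_nat p * R"
    by (simp add: G_def diff_diff_eq diff_eq_eq add.commute)
  have "(of_nat p * (F ^ p * Q) + fps_X * fps_deriv (F ^ p)) $ p = 0"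
    using newton_identity_power[of p E] by (simp add: F_def Q_def)
  then have "of_nat p * ((F ^ p * Q) $ p + (F ^ p) $ p) = 0"
    using p0 by (simp add: distrib_left flip: fps_of_nat)
  \<comment> \<open>cancelling p is the only use of torsion-freeness\<close>
  then have psi_eq: "(F ^ p * Q) $ p + (F ^ p) $ p = 0"
    using p0 by simp
  have "(G ^ p * Q) $ p = 0"
    using startsby_zero_power_prefix[OF G0, of p]
    by (auto simp: fps_mult_nth Q_def le_less intro!: sum.neutral)
  then have FQ: "(F ^ p * Q) $ p = newton_psi E p + of_nat p * (R * Q) $ p"
    using p0 by (simp add: F_power distrib_right mult.assoc Q_def flip: fps_of_nat)
  have Fp: "(F ^ p) $ p = (- E 1) ^ p + of_nat p * R $ p"
    using p0 by (simp add: F_power startsby_zero_power_nth_same[OF G0, unfolded G1] flip: fps_of_nat)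
  have "newton_psi E p - E 1 ^ p = - (of_nat p * ((R * Q) $ p + R $ p)) - ((- E 1) ^ p + E 1 ^ p)"
    using psi_eq unfolding FQ Fp by (simp add: eq_neg_iff_add_eq_0 algebra_simps)
  then show ?thesis
    using prime_dvd_neg_power_add[OF p, of "E 1"] by (metis dvd_diff dvd_minus_iff dvd_triv_left)
qed

lemma coeff_trunc [simp]: "coeff (trunc m a) j = (if j < m then coeff a j else 0)"
  unfolding trunc_def by (simp add: coeff_sum)

lemma trunc_trunc [simp]: "trunc m (trunc m a) = trunc m a"
  by (simp add: poly_eq_iff)

lemma trunc_eq_iff_monom_dvd: "trunc m a = trunc m b \<longleftrightarrow> monom 1 m dvd a - b"
  by (auto simp: poly_eq_iff monom_1_dvd_iff')

lemma smult_int_eq_of_int_mult: "smult c p = of_int c * p"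
  for p :: "int poly"
  by (simp add: of_int_poly)

declare adams.simps [simp del]

lemma adams_eq_trunc_newton_psi: "adams m L k a = trunc m (newton_psi (\<lambda>i. L i a) k)"
proof (induction k rule: less_induct)
  case (less k)
  let ?E = "\<lambda>i. L i a"
  show ?case
  proof (cases "k = 0")
    case True
    then show ?thesis
      by (simp add: adams.simps trunc_def)
  next
    case False
    have "monom 1 m dvd adams m L (k - i) a - newton_psi ?E (k - i)" if "i \<in> {1..<k}" for i
      using less[of "k - i"] that by (simp add: trunc_eq_iff_monom_dvd [symmetric])
    then have "monom 1 m dvd
        (\<Sum>i\<in>{1..<k}. (-1) ^ (i + 1) * L i a * (adams m L (k - i) a - newton_psi ?E (k - i)))"
      by (intro dvd_sum dvd_mult)
    then show ?thesis
      using False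
      by (subst adams.simps, subst newton_psi.simps)
        (simp add: trunc_eq_iff_monom_dvd smult_int_eq_of_int_mult algebra_simps
          flip: sum_subtractf)
  qed
qed

lemma adams_prime_cong_power:
  assumes "lambda_ring m L" and "a \<in> tcarrier m" and "prime p"
  shows "[:int p:] dvd adams m L p a - trunc m (a ^ p)"
proof -
  have "L 1 a = a"
    using assms(1,2) by (simp add: lambda_ring_def)
  then have "[:int p:] dvd newton_psi (\<lambda>i. L i a) p - a ^ p"
    using newton_psi_prime_cong[OF assms(3), of "\<lambda>i. L i a"] by (simp add: of_nat_poly)
  then show ?thesis
    unfolding adams_eq_trunc_newton_psi by (simp add: const_poly_dvd_iff)
qed

lemma const_dvd_pcompose_diff_left:
  fixes a b s :: "'a::comm_ring_1 poly"
  assumes "[:c:] dvd a - b"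
  shows "[:c:] dvd pcompose a s - pcompose b s"
proof -
  obtain r where "a - b = [:c:] * r"
    using assms by (elim dvdE)
  then have "pcompose a s - pcompose b s = [:c:] * pcompose r s"
    by (metis pcompose_const pcompose_diff pcompose_mult)
  then show ?thesis
    by (metis dvd_triv_left)
qed

lemma dvd_pcompose_diff_right:
  fixes q x y :: "'a::comm_ring_1 poly"
  assumes "D dvd x - y"
  shows "D dvd pcompose q x - pcompose q y"
proof (induction q)
  case (pCons a q)
  have "pcompose (pCons a q) x - pcompose (pCons a q) y
      = x * (pcompose q x - pcompose q y) + (x - y) * pcompose q y"
    by (simp add: pcompose_pCons algebra_simps)
  then show ?case
    using pCons.IH assms by simp
qed simp

lemma coeff_pcompose_below_double_order:
  fixes q w :: "'a::comm_ring_1 poly"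
  assumes "coeff q 0 = 0" and "\<forall>i<k. coeff w i = 0" and "j < 2 * k"
  shows "coeff (pcompose q w) j = coeff q 1 * coeff w j"
proof -
  obtain c r where q: "q = pCons 0 (pCons c r)"
    using assms(1) by (metis coeff_pCons_0 pCons_cases)
  have "monom 1 k dvd w"
    using assms(2) by (simp add: monom_1_dvd_iff')
  then have "monom 1 (2 * k) dvd w * w * pcompose r w"
    using mult_dvd_mono by (metis dvd_mult2 mult_1 mult_2 mult_monom)
  then have "coeff (w * w * pcompose r w) j = 0"
    using assms(3) by (simp add: monom_1_dvd_iff')
  moreover have "pcompose q w = smult c w + w * w * pcompose r w"
    by (simp add: q pcompose_pCons algebra_simps)
  ultimately show ?thesis
    by (simp add: q)
qed

lemma pcompose_X_power: "pcompose (X ^ k) s = s ^ k"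
  by (induction k) (simp_all add: pcompose_mult pcompose_pCons pcompose_1)

lemma coeff_power_startsby_zero:
  fixes s :: "'a::comm_ring_1 poly"
  assumes "coeff s 0 = 0"
  shows "\<forall>j<n. coeff (s ^ n) j = 0" and "coeff (s ^ n) n = coeff s 1 ^ n"
proof -
  obtain h where h: "s = monom 1 1 * h"
    using assms by (metis dvdE less_one monom_1_dvd_iff')
  then have "coeff s 1 = coeff h 0"
    by (simp add: coeff_monom_mult)
  then show "\<forall>j<n. coeff (s ^ n) j = 0" and "coeff (s ^ n) n = coeff s 1 ^ n"
    by (simp_all add: h power_mult_distrib monom_power coeff_monom_mult coeff_0_power)
qed

lemma coeff_pcompose_trunc_power:
  fixes q s :: "int poly"
  assumes q0: "coeff q 0 = 0" and s0: "coeff s 0 = 0" and unit: "coeff q 1 * coeff s 1 = 1"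
    and "odd p" and "n \<le> p" and "j \<le> n"
  shows "coeff (pcompose q (pcompose (trunc (n + 1) (X ^ p)) s)) j = coeff (monom 1 p) j"
proof (cases "p = n")
  case False
  then have "trunc (n + 1) (X ^ p) = 0"
    using \<open>n \<le> p\<close> by (simp add: poly_eq_iff flip: monom_altdef[of 1, simplified])
  then show ?thesis
    using False \<open>n \<le> p\<close> \<open>j \<le> n\<close> q0 by (simp add: pcompose_0')
next
  case True
  note coeff_sn = coeff_power_startsby_zero[OF s0, of n]
  have "trunc (n + 1) (X ^ p) = X ^ n"
    using True by (simp add: poly_eq_iff flip: monom_altdef[of 1, simplified])
  then have "pcompose (trunc (n + 1) (X ^ p)) s = s ^ n"
    by (simp add: pcompose_X_power)
  moreover have "coeff (pcompose q (s ^ n)) j = coeff q 1 * coeff (s ^ n) j"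
    using \<open>odd p\<close> True \<open>j \<le> n\<close> coeff_sn(1)
    by (intro coeff_pcompose_below_double_order[OF q0]) (auto dest: odd_pos)
  moreover have "coeff q 1 * coeff s 1 ^ n = 1"
    using unit \<open>odd p\<close> True unfolding zmult_eq_1_iff by auto
  ultimately show ?thesis
    using \<open>j \<le> n\<close> True coeff_sn by (auto simp: le_less)
qed

lemma filtered_lambda_iso_coeff_0:
  assumes "filtered_lambda_iso m d L1 L2 \<sigma>" and "d > 0" and "m \<ge> 2"
  shows "coeff (\<sigma> X) 0 = 0"
proof -
  have "X \<in> filt m d d"
    using assms(2,3) by (auto simp: filt_def tcarrier_def coeff_pCons split: nat.splits)
  then have "\<sigma> X \<in> filt m d d"
    using assms(1) unfolding filtered_lambda_iso_def by blast
  then show ?thesis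
    using assms(2) by (simp add: filt_def)
qed

theorem theorem1p9:
  fixes n d :: nat
    and LR LS LRt :: "nat \<Rightarrow> int poly \<Rightarrow> int poly"
    and \<sigma> :: "int poly \<Rightarrow> int poly"
    and sinv :: "int poly"
  assumes "n \<ge> 3" and "d > 0"
    and "filtered_lambda_ring n d LR"
    and "filtered_lambda_ring n d LS"
    and "filtered_lambda_iso n d LR LS \<sigma>"
    and "sinv \<in> tcarrier (n + 1)" and "coeff sinv 0 = 0"
    and "trunc (n + 1) (pcompose (\<sigma> X) sinv) = X"
    and "trunc (n + 1) (pcompose sinv (\<sigma> X)) = X"
    and "filtered_lambda_ring (n + 1) d LRt"
    and "\<forall>p. prime p \<longrightarrow> trunc n (adams (n + 1) LRt p X) = adams n LR p X"
  shows "\<forall>p. prime p \<and> p \<ge> n \<longrightarrow>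
           (\<forall>j. int p dvd coeff (trunc (n + 1) (pcompose sinv (pcompose (adams (n + 1) LRt p X) (\<sigma> X)))
                                 - trunc (n + 1) (monom 1 p)) j)"
proof (intro allI impI, elim conjE)
  fix p j :: nat
  assume p: "prime p" and "p \<ge> n"
  define s where "s = \<sigma> X"
  define P where "P = adams (n + 1) LRt p X"
  have "odd p"
    using p \<open>p \<ge> n\<close> \<open>n \<ge> 3\<close> by (intro prime_odd_nat) auto
  have s0: "coeff s 0 = 0"
    using filtered_lambda_iso_coeff_0[OF assms(5) \<open>d > 0\<close>] \<open>n \<ge> 3\<close> by (simp add: s_def)
  have "coeff (pcompose sinv s) 1 = 1"
    using arg_cong[OF assms(9), of "\<lambda>a. coeff a 1"] \<open>n \<ge> 3\<close> by (simp add: s_def)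
  then have unit: "coeff sinv 1 * coeff s 1 = 1"
    using coeff_pcompose_below_double_order[OF assms(7), of 1 s 1] s0 by simp
  have "[:int p:] dvd P - trunc (n + 1) (X ^ p)"
    unfolding P_def using assms(10) p \<open>n \<ge> 3\<close>
    by (intro adams_prime_cong_power)
      (auto simp: filtered_lambda_ring_def tcarrier_def coeff_pCons split: nat.splits)
  then have "[:int p:] dvd
      pcompose sinv (pcompose P s) - pcompose sinv (pcompose (trunc (n + 1) (X ^ p)) s)"
    by (intro dvd_pcompose_diff_right const_dvd_pcompose_diff_left)
  then have "int p dvd coeff (pcompose sinv (pcompose P s)) j - coeff (monom 1 p) j" if "j \<le> n"
    using coeff_pcompose_trunc_power[OF assms(7) s0 unit \<open>odd p\<close> \<open>p \<ge> n\<close> that]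
    by (metis coeff_diff const_poly_dvd_iff)
  then show "int p dvd
      coeff (trunc (n + 1) (pcompose sinv (pcompose P s)) - trunc (n + 1) (monom 1 p)) j"
    by auto
qed

end
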